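(* Let $n,k,d,\mu$ be integers with $1\le k\le d<n$ and $\mu\in\{1,2,\dots,k\}$, and let $\mathbb{F}_q$ be a finite field with $q\ge n$. Define $$\alpha(k,d;\mu)=\sum_{m=0}^{\mu}(d-k)^{\mu-m}\binom{k}{m},\qquad \beta(k,d;\mu)=\sum_{m=0}^{\mu}(d-k)^{\mu-m}\binom{k-1}{m-1},$$ $$F(k,d;\mu)=\sum_{m=0}^{\mu}k(d-k)^{\mu-m}\binom{k}{m}-\binom{k}{\mu+1}.$$ Then there exists a linear $(n,k,d)$ exact-repair regenerating code over $\mathbb{F}_q$ with parameters $(\alpha,\beta,F)=(\alpha(k,d;\mu),\beta(k,d;\mu),F(k,d;\mu))$.
   Context: Conventions: $0^0=1$; $\binom{\ell}{m}=0$ if $m<0$ or $m>\ell$. An $(n,k,d)$ exact-repair regenerating code over $\mathbb{F}_q$ with parameters $(\alpha,\beta,F)$ encodes a file consisting of $F$ symbols of $\mathbb{F}_q$ into the contents of $n$ nodes, each node storing $\alpha$ symbols of $\mathbb{F}_q$, such that: (data recovery) for every set of $k$ nodes, the file is a function of the contents of these $k$ nodes; (exact repair) for every node $f$ and every set $\mathcal{H}$ of $d$ nodes not containing $f$, each helper $h\in\mathcal H$ can send $\beta$ symbols of $\mathbb{F}_q$, computed from the content of node $h$ (and the identities of $h$ and $f$), from which the content of node $f$ is exactly reconstructed. The code is linear if all node contents and all transmitted repair symbols are $\mathbb{F}_q$-linear functions of the file symbols. *)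

theory Defs
  imports Main
begin

definition alpha_p :: "nat \<Rightarrow> nat \<Rightarrow> nat \<Rightarrow> nat" where
  "alpha_p k d \<mu> = (\<Sum>m = 0..\<mu>. (d - k) ^ (\<mu> - m) * (k choose m))"

definition beta_p :: "nat \<Rightarrow> nat \<Rightarrow> nat \<Rightarrow> nat" where
  "beta_p k d \<mu> = (\<Sum>m = 0..\<mu>. (d - k) ^ (\<mu> - m) *
      (if m = 0 then 0 else (k - 1) choose (m - 1)))"

definition F_p :: "nat \<Rightarrow> nat \<Rightarrow> nat \<Rightarrow> int" where
  "F_p k d \<mu> = (\<Sum>m = 0..\<mu>. int k * int (d - k) ^ (\<mu> - m) * int (k choose m))
       - int (k choose (\<mu> + 1))"

text \<open>Files: vectors of F symbols, represented as functions vanishing from index F on.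
  Node contents: enc i x j is symbol j (j < alpha) stored at node i for file x.
  Repair messages: rep f h v j is symbol j (j < beta) sent by helper h to repair node f,
  computed from the content v of node h.\<close>

definition files :: "nat \<Rightarrow> (nat \<Rightarrow> 'a::zero) set" where
  "files F = {x. \<forall>i\<ge>F. x i = 0}"

definition content :: "nat \<Rightarrow> (nat \<Rightarrow> (nat \<Rightarrow> 'a) \<Rightarrow> nat \<Rightarrow> 'a::zero) \<Rightarrow> nat \<Rightarrow> (nat \<Rightarrow> 'a) \<Rightarrow> nat \<Rightarrow> 'a" where
  "content \<alpha> enc i x = (\<lambda>j. if j < \<alpha> then enc i x j else 0)"

definition lin_on :: "nat \<Rightarrow> ((nat \<Rightarrow> 'a::field) \<Rightarrow> 'a) \<Rightarrow> bool" where
  "lin_on F g \<longleftrightarrow> (\<forall>x\<in>files F. \<forall>y\<in>files F. \<forall>a.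
       g (\<lambda>i. x i + y i) = g x + g y \<and> g (\<lambda>i. a * x i) = a * g x)"

definition regen_code ::
  "nat \<Rightarrow> nat \<Rightarrow> nat \<Rightarrow> nat \<Rightarrow> nat \<Rightarrow> nat \<Rightarrow>
   (nat \<Rightarrow> (nat \<Rightarrow> 'a::field) \<Rightarrow> nat \<Rightarrow> 'a) \<Rightarrow>
   (nat \<Rightarrow> nat \<Rightarrow> (nat \<Rightarrow> 'a) \<Rightarrow> nat \<Rightarrow> 'a) \<Rightarrow> bool" where
  "regen_code n k d \<alpha> \<beta> F enc rep \<longleftrightarrow>
     \<comment> \<open>data recovery: the file is a function of the contents of any k nodes\<close>
     (\<forall>K. K \<subseteq> {0..<n} \<and> card K = k \<longrightarrow>
        (\<forall>x\<in>files F. \<forall>y\<in>files F.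
           (\<forall>i\<in>K. content \<alpha> enc i x = content \<alpha> enc i y) \<longrightarrow> x = y)) \<and>
     \<comment> \<open>exact repair: content of f is a function of the messages of any d helpers\<close>
     (\<forall>f H. f < n \<and> H \<subseteq> {0..<n} - {f} \<and> card H = d \<longrightarrow>
        (\<forall>x\<in>files F. \<forall>y\<in>files F.
           (\<forall>h\<in>H. \<forall>j<\<beta>. rep f h (content \<alpha> enc h x) j = rep f h (content \<alpha> enc h y) j)
           \<longrightarrow> content \<alpha> enc f x = content \<alpha> enc f y))"

definition linear_code ::
  "nat \<Rightarrow> nat \<Rightarrow> nat \<Rightarrow> nat \<Rightarrow>
   (nat \<Rightarrow> (nat \<Rightarrow> 'a::field) \<Rightarrow> nat \<Rightarrow> 'a) \<Rightarrow>
   (nat \<Rightarrow> nat \<Rightarrow> (nat \<Rightarrow> 'a) \<Rightarrow> nat \<Rightarrow> 'a) \<Rightarrow> bool" where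
  "linear_code n \<alpha> \<beta> F enc rep \<longleftrightarrow>
     (\<forall>i<n. \<forall>j<\<alpha>. lin_on F (\<lambda>x. enc i x j)) \<and>
     (\<forall>f<n. \<forall>h<n. h \<noteq> f \<longrightarrow> (\<forall>j<\<beta>. lin_on F (\<lambda>x. rep f h (content \<alpha> enc h x) j)))"

end

(*
  Put r = d - k and let V = U \<oplus> W with bases u_0, ..., u_{k-1} of U and w_0, ..., w_{r-1} of W.  Node i stores
  \<psi>_i \<cdot> D = \<Sum>_y a_i^y D_y for distinct field elements a_i.

  Contraction \<iota>_\<psi> with a covector is an antiderivation with \<iota>_\<psi> \<circ> \<iota>_\<psi> = 0, hence
  \<iota>_\<psi>(\<Sum>_y e_y D_y) = \<psi> \<cdot> D - \<Sum>_y e_y \<iota>_\<psi> D_y.  Data recovery: at k nodes the Vandermonde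
  system returns the U-components D_x, by descending induction on the length of the W-word, and
  these contain all free symbols.  Exact repair of node f: helper h sends the coordinates of
  \<iota>_{\<psi>_f}(\<psi>_h \<cdot> D) of degree \<mu> - 1 not involving u_0.  From d helpers the Vandermonde system
  yields these coordinates of every \<iota>_{\<psi>_f} D_y, hence all of them, because \<iota> \<circ> \<iota> = 0 and
  \<psi>_f(u_0) = 1; then \<psi>_f \<cdot> D = \<Sum>_y e_y \<iota>_{\<psi>_f} D_y.
*)

theory Submission
  imports Defs "HOL-Computational_Algebra.Polynomial"
begin

section \<open>Signs and the exterior algebra of U\<close>

definition ins_sign :: "nat \<Rightarrow> nat set \<Rightarrow> 'a::comm_ring_1" where
  "ins_sign x I = (-1) ^ card {y\<in>I. y < x}"

lemma ins_sign_insert: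
  assumes "y \<notin> I"
  shows "ins_sign x (insert y I) = (if y < x then - ins_sign x I else (ins_sign x I :: 'a::comm_ring_1))"
proof (cases "y < x")
  case True
  have "finite {z\<in>I. z < x}" by (rule finite_subset[of _ "{..<x}"]) auto
  moreover have "{z\<in>insert y I. z < x} = insert y {z\<in>I. z < x}" using True by auto
  ultimately show ?thesis using True assms by (simp add: ins_sign_def)
next
  case False
  then have "{z\<in>insert y I. z < x} = {z\<in>I. z < x}" by auto
  then show ?thesis using False by (simp add: ins_sign_def)
qed

lemma ins_sign_square: "ins_sign x I * ins_sign x I = (1::'a::comm_ring_1)"
  by (simp add: ins_sign_def flip: power_add power_mult_distrib)

lemma ins_sign_swap:
  "x \<noteq> y \<Longrightarrow> x \<notin> I \<Longrightarrow> y \<notin> I \<Longrightarrow>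
    ins_sign y (insert x I) * ins_sign x (insert y I) = - (ins_sign x I * (ins_sign y I :: 'a::comm_ring_1))"
  by (cases "x < y") (simp_all add: ins_sign_insert)

lemma ins_sign_Min: "\<forall>z\<in>I. x \<le> z \<Longrightarrow> ins_sign x I = 1"
proof -
  assume "\<forall>z\<in>I. x \<le> z"
  then have e: "{y\<in>I. y < x} = {}" by auto
  show ?thesis unfolding ins_sign_def e by simp
qed

definition ext_wedge :: "nat \<Rightarrow> (nat set \<Rightarrow> 'a::comm_ring_1) \<Rightarrow> nat set \<Rightarrow> 'a" where
  "ext_wedge x \<omega> J = (if x \<in> J then ins_sign x (J - {x}) * \<omega> (J - {x}) else 0)"

definition ext_contr ::
  "nat \<Rightarrow> (nat \<Rightarrow> 'a::comm_ring_1) \<Rightarrow> (nat set \<Rightarrow> 'a) \<Rightarrow> nat set \<Rightarrow> 'a" where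
  "ext_contr k \<psi> \<omega> I = (\<Sum>x\<in>{..<k} - I. ins_sign x I * \<psi> x * \<omega> (insert x I))"

lemma ext_contr_wedge_notin:
  assumes "x < k" and notin: "x \<notin> I"
  shows "ext_contr k \<psi> (ext_wedge x \<omega>) I = \<psi> x * \<omega> I"
proof -
  have "ext_contr k \<psi> (ext_wedge x \<omega>) I = (\<Sum>y\<in>{..<k} - I. if y = x then \<psi> x * \<omega> I else 0)"
    unfolding ext_contr_def
  proof (rule sum.cong[OF refl])
    fix y assume "y \<in> {..<k} - I"
    show "ins_sign y I * \<psi> y * ext_wedge x \<omega> (insert y I) = (if y = x then \<psi> x * \<omega> I else 0)"
    proof (cases "y = x")
      case True
      then have "insert y I - {x} = I" using notin by auto
      have "ins_sign x I * \<psi> x * (ins_sign x I * \<omega> I) = (ins_sign x I * ins_sign x I) * (\<psi> x * \<omega> I)"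
        by (simp only: mult_ac)
      then show ?thesis using True \<open>insert y I - {x} = I\<close> notin
        by (simp add: ext_wedge_def ins_sign_square)
    qed (use notin \<open>y \<in> {..<k} - I\<close> in \<open>auto simp: ext_wedge_def\<close>)
  qed
  also have "\<dots> = \<psi> x * \<omega> I" using notin assms(1) by (simp add: sum.delta')
  finally show ?thesis .
qed

lemma ext_contr_wedge:
  assumes "x < k"
  shows "ext_contr k \<psi> (ext_wedge x \<omega>) I = \<psi> x * \<omega> I - ext_wedge x (ext_contr k \<psi> \<omega>) I"
proof (cases "x \<in> I")
  case True
  define I' where "I' = I - {x}"
  have I: "I = insert x I'" "x \<notin> I'" using True by (auto simp: I'_def)
  have D: "{..<k} - I' = insert x ({..<k} - I)" using I assms by auto
  have "ext_contr k \<psi> (ext_wedge x \<omega>) I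
      = (\<Sum>y\<in>{..<k} - I. - (ins_sign x I' * ins_sign y I' * \<psi> y * \<omega> (insert y I')))"
    unfolding ext_contr_def
  proof (rule sum.cong[OF refl])
    fix y assume y: "y \<in> {..<k} - I"
    then have "y \<noteq> x" "y \<notin> I'" using I by auto
    then have swap: "ins_sign y I * ins_sign x (insert y I') = - (ins_sign x I' * ins_sign y I' :: 'a)"
      using I ins_sign_swap[of x y I'] by simp
    have "insert y I - {x} = insert y I'" using I y by auto
    then have "ins_sign y I * \<psi> y * ext_wedge x \<omega> (insert y I)
        = (ins_sign y I * ins_sign x (insert y I')) * \<psi> y * \<omega> (insert y I')"
      using I by (simp add: ext_wedge_def mult_ac)
    then show "ins_sign y I * \<psi> y * ext_wedge x \<omega> (insert y I)
       = - (ins_sign x I' * ins_sign y I' * \<psi> y * \<omega> (insert y I'))"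
      unfolding swap by simp
  qed
  also have "\<dots> = \<psi> x * \<omega> I - ins_sign x I' * ext_contr k \<psi> \<omega> I'"
  proof -
    have xD: "x \<notin> {..<k} - I" using True by simp
    have "ins_sign x I' * ext_contr k \<psi> \<omega> I'
        = ins_sign x I' * (ins_sign x I' * \<psi> x * \<omega> (insert x I')
          + (\<Sum>y\<in>{..<k} - I. ins_sign y I' * \<psi> y * \<omega> (insert y I')))"
      unfolding ext_contr_def D sum.insert[OF finite_Diff[OF finite_lessThan] xD] ..
    also have "\<dots> = (ins_sign x I' * ins_sign x I') * \<psi> x * \<omega> I
          + (\<Sum>y\<in>{..<k} - I. ins_sign x I' * ins_sign y I' * \<psi> y * \<omega> (insert y I'))"
      unfolding I(1)[symmetric] by (simp add: distrib_left sum_distrib_left mult.assoc)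
    finally show ?thesis by (simp add: ins_sign_square sum_negf)
  qed
  finally show ?thesis using True by (simp add: ext_wedge_def I'_def)
next
  case False
  then show ?thesis using ext_contr_wedge_notin[OF assms] by (simp add: ext_wedge_def)
qed

lemma ext_contr_contr: "ext_contr k \<psi> (ext_contr k \<psi> \<omega>) I = 0"
proof -
  define S where "S = {..<k} - I"
  define g where "g x y = ins_sign x I * \<psi> x * (ins_sign y (insert x I) * \<psi> y * \<omega> (insert y (insert x I)))"
    for x y
  have fS: "finite S" by (simp add: S_def)
  have anti: "g y x = - g x y" if "x \<in> S" "y \<in> S" "x < y" for x y
  proof -
    have "x \<notin> I" "y \<notin> I" using that by (auto simp: S_def)
    then have "ins_sign y (insert x I) = - (ins_sign y I :: 'a)" "ins_sign x (insert y I) = (ins_sign x I :: 'a)"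
      using that ins_sign_insert[of x I y] ins_sign_insert[of y I x] by auto
    moreover have "insert x (insert y I) = insert y (insert x I)" by auto
    ultimately show ?thesis by (simp add: g_def algebra_simps)
  qed
  have split: "{..<k} - insert x I = {y\<in>S. x < y} \<union> {y\<in>S. y < x}" if "x \<in> S" for x
    using that by (auto simp: S_def)
  have "ext_contr k \<psi> (ext_contr k \<psi> \<omega>) I = (\<Sum>x\<in>S. \<Sum>y\<in>{..<k} - insert x I. g x y)"
    by (simp add: ext_contr_def S_def g_def sum_distrib_left)
  also have "\<dots> = (\<Sum>x\<in>S. (\<Sum>y\<in>{y\<in>S. x < y}. g x y) + (\<Sum>y\<in>{y\<in>S. y < x}. g x y))"
  proof (rule sum.cong[OF refl])
    fix x assume "x \<in> S"
    show "(\<Sum>y\<in>{..<k} - insert x I. g x y) = (\<Sum>y\<in>{y\<in>S. x < y}. g x y) + (\<Sum>y\<in>{y\<in>S. y < x}. g x y)"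
      unfolding split[OF \<open>x \<in> S\<close>] by (rule sum.union_disjoint) (use fS in auto)
  qed
  also have "\<dots> = (\<Sum>x\<in>S. \<Sum>y\<in>{y\<in>S. x < y}. g x y) + (\<Sum>y\<in>S. \<Sum>x\<in>{x\<in>S. y < x}. g x y)"
    using sum.swap_restrict[OF fS fS, of g "\<lambda>x y. y < x"] by (simp add: sum.distrib)
  also have "(\<Sum>y\<in>S. \<Sum>x\<in>{x\<in>S. y < x}. g x y) = (\<Sum>x\<in>S. \<Sum>y\<in>{y\<in>S. x < y}. - g x y)"
    by (intro sum.cong refl) (auto intro: anti)
  finally show ?thesis by (simp add: sum_negf)
qed

section \<open>Forms and contraction\<close>

text \<open>A form assigns a coefficient to each basis element w \<otimes> u_I of \<Lambda>U \<otimes> T(W), indexed by a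
  word w over W and a set I of indices of U.  In a covector \<psi> and in vectors of forms, index
  x < k refers to u_x and index k + j to w_j.  The recursion for contr is the coefficientwise form
  of \<iota>(w_j \<otimes> \<omega>) = \<psi>(w_j) \<omega> - w_j \<otimes> \<iota> \<omega>.\<close>

type_synonym 'a form = "nat list \<Rightarrow> nat set \<Rightarrow> 'a"

primrec contr :: "nat \<Rightarrow> nat \<Rightarrow> (nat \<Rightarrow> 'a::comm_ring_1) \<Rightarrow> 'a form \<Rightarrow> 'a form" where
  "contr k r \<psi> a [] I = ext_contr k \<psi> (a []) I + (\<Sum>j<r. \<psi> (k + j) * a [j] I)"
| "contr k r \<psi> a (j # w) I =
     (\<Sum>j'<r. \<psi> (k + j') * a (j' # j # w) I) - contr k r \<psi> (\<lambda>v. a (j # v)) w I"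

definition mul_u :: "nat \<Rightarrow> 'a::comm_ring_1 form \<Rightarrow> 'a form" where
  "mul_u x a w J = (-1) ^ length w * ext_wedge x (a w) J"

definition mul_w :: "nat \<Rightarrow> 'a::comm_ring_1 form \<Rightarrow> 'a form" where
  "mul_w j a w J = (case w of [] \<Rightarrow> 0 | j' # w' \<Rightarrow> if j' = j then a w' J else 0)"

lemma contr_add: "contr k r \<psi> (\<lambda>w I. a w I + b w I) w I = contr k r \<psi> a w I + contr k r \<psi> b w I"
  by (induction w arbitrary: a b I) (simp_all add: ext_contr_def sum.distrib algebra_simps)

lemma contr_scale: "contr k r \<psi> (\<lambda>w I. c * a w I) w I = c * contr k r \<psi> a w I"
  by (induction w arbitrary: a I) (simp_all add: ext_contr_def sum_distrib_left algebra_simps)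

lemma contr_zero: "contr k r \<psi> (\<lambda>w I. 0) w I = 0"
  using contr_scale[of k r \<psi> 0 "\<lambda>w I. 0" w I] by simp

lemma contr_neg: "contr k r \<psi> (\<lambda>w I. - a w I) w I = - contr k r \<psi> a w I"
  using contr_scale[of k r \<psi> "-1" a w I] by simp

lemma contr_diff: "contr k r \<psi> (\<lambda>w I. a w I - b w I) w I = contr k r \<psi> a w I - contr k r \<psi> b w I"
  using contr_add[of k r \<psi> a "\<lambda>w I. - b w I" w I] contr_neg[of k r \<psi> b w I] by simp

lemma contr_lincomb:
  "contr k r \<psi> (\<lambda>w I. c1 * a w I + c2 * b w I) w I = c1 * contr k r \<psi> a w I + c2 * contr k r \<psi> b w I"
  by (simp add: contr_add contr_scale)

lemma contr_sum:
  "finite S \<Longrightarrow> contr k r \<psi> (\<lambda>w I. \<Sum>s\<in>S. f s w I) w I = (\<Sum>s\<in>S. contr k r \<psi> (f s) w I)"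
proof (induction S rule: finite_induct)
  case empty
  then show ?case using contr_zero by simp
next
  case (insert s S)
  then show ?case using contr_add[of k r \<psi> "f s" "\<lambda>w I. \<Sum>s\<in>S. f s w I" w I] by simp
qed

lemma contr_mul_w:
  assumes "j < r"
  shows "contr k r \<psi> (mul_w j a) w I = \<psi> (k + j) * a w I - mul_w j (contr k r \<psi> a) w I"
proof -
  have pick: "(\<Sum>j'<r. \<psi> (k + j') * mul_w j a (j' # v) I) = \<psi> (k + j) * a v I" for v
  proof -
    have "(\<Sum>j'<r. \<psi> (k + j') * mul_w j a (j' # v) I) = (\<Sum>j'<r. if j' = j then \<psi> (k + j) * a v I else 0)"
      by (rule sum.cong) (auto simp: mul_w_def)
    then show ?thesis using assms by simp
  qed
  show ?thesis
  proof (cases w)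
    case Nil
    then show ?thesis using pick[of "[]"] by (simp add: mul_w_def ext_contr_def)
  next
    case (Cons j1 w')
    have "(\<lambda>v. mul_w j a (j1 # v)) = (\<lambda>v J. if j1 = j then a v J else 0)"
      by (auto simp: mul_w_def fun_eq_iff)
    then show ?thesis using Cons pick[of w] by (simp add: mul_w_def contr_zero)
  qed
qed

lemma contr_mul_u:
  assumes "x < k"
  shows "contr k r \<psi> (mul_u x a) w I = \<psi> x * a w I - mul_u x (contr k r \<psi> a) w I"
proof (induction w arbitrary: a I)
  case Nil
  show ?case
    by (simp add: mul_u_def ext_contr_wedge[OF assms]) (simp add: ext_wedge_def sum_distrib_left sum_negf algebra_simps)
next
  case (Cons j w)
  have "(\<lambda>v. mul_u x a (j # v)) = (\<lambda>v J. - mul_u x (\<lambda>v. a (j # v)) v J)"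
    by (auto simp: mul_u_def fun_eq_iff)
  then have IH: "contr k r \<psi> (\<lambda>v. mul_u x a (j # v)) w I
      = - (\<psi> x * a (j # w) I - mul_u x (contr k r \<psi> (\<lambda>v. a (j # v))) w I)"
    using Cons.IH[of "\<lambda>v. a (j # v)" I] by (simp add: contr_neg)
  show ?case
    unfolding contr.simps IH by (simp add: mul_u_def ext_wedge_def sum_distrib_left algebra_simps)
qed

lemma contr_contr: "contr k r \<psi> (contr k r \<psi> a) w I = 0"
proof (induction w arbitrary: a I)
  case Nil
  have U: "ext_contr k \<psi> (contr k r \<psi> a []) I
      = ext_contr k \<psi> (ext_contr k \<psi> (a [])) I + (\<Sum>j<r. \<psi> (k + j) * ext_contr k \<psi> (a [j]) I)"
    unfolding ext_contr_def contr.simps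
    by (simp add: distrib_left sum.distrib sum_distrib_left algebra_simps sum.swap[of _ "{..<r}"])
  have W: "(\<Sum>j<r. \<psi> (k + j) * contr k r \<psi> a [j] I)
      = (\<Sum>j<r. \<Sum>j'<r. \<psi> (k + j) * (\<psi> (k + j') * a [j', j] I))
        - (\<Sum>j<r. \<psi> (k + j) * ext_contr k \<psi> (a [j]) I)
        - (\<Sum>j<r. \<Sum>j'<r. \<psi> (k + j) * (\<psi> (k + j') * a [j, j'] I))"
    by (simp add: right_diff_distrib distrib_left sum_subtractf sum.distrib sum_distrib_left)
  have "(\<Sum>j<r. \<Sum>j'<r. \<psi> (k + j) * (\<psi> (k + j') * a [j, j'] I))
      = (\<Sum>j<r. \<Sum>j'<r. \<psi> (k + j) * (\<psi> (k + j') * a [j', j] I))"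
    by (subst sum.swap) (simp add: algebra_simps)
  then show ?case using U W by (simp add: ext_contr_contr)
next
  case (Cons j w)
  define b where "b j' = (\<lambda>v. a (j' # j # v))" for j'
  have "(\<lambda>v. contr k r \<psi> a (j # v))
      = (\<lambda>v J. (\<Sum>j''<r. \<psi> (k + j'') * b j'' v J) - contr k r \<psi> (\<lambda>u. a (j # u)) v J)"
    by (simp add: fun_eq_iff b_def)
  then have tail: "contr k r \<psi> (\<lambda>v. contr k r \<psi> a (j # v)) w I
      = (\<Sum>j''<r. \<psi> (k + j'') * contr k r \<psi> (b j'') w I)"
    using Cons.IH[of "\<lambda>u. a (j # u)" I] by (simp add: contr_diff contr_sum contr_scale)
  have "(\<Sum>j'<r. \<psi> (k + j') * contr k r \<psi> a (j' # j # w) I)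
      = (\<Sum>j'<r. \<Sum>j''<r. \<psi> (k + j') * (\<psi> (k + j'') * a (j'' # j' # j # w) I))
        - (\<Sum>j'<r. \<Sum>j''<r. \<psi> (k + j') * (\<psi> (k + j'') * a (j' # j'' # j # w) I))
        + (\<Sum>j'<r. \<psi> (k + j') * contr k r \<psi> (b j') w I)"
    by (simp add: b_def right_diff_distrib sum_subtractf sum_distrib_left sum.distrib algebra_simps)
  also have "(\<Sum>j'<r. \<Sum>j''<r. \<psi> (k + j') * (\<psi> (k + j'') * a (j'' # j' # j # w) I))
      = (\<Sum>j'<r. \<Sum>j''<r. \<psi> (k + j') * (\<psi> (k + j'') * a (j' # j'' # j # w) I))"
    by (subst sum.swap) (simp add: algebra_simps)
  finally show ?case using tail by simp
qed

definition basis_idx :: "nat \<Rightarrow> nat \<Rightarrow> nat \<Rightarrow> nat list \<Rightarrow> nat set \<Rightarrow> bool" where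
  "basis_idx k r m w I \<longleftrightarrow> set w \<subseteq> {..<r} \<and> I \<subseteq> {..<k} \<and> length w + card I = m"

lemma contr_Nil_support:
  assumes "\<forall>v J. a v J \<noteq> 0 \<longrightarrow> basis_idx k r m v J"
    and "contr k r \<psi> a [] I \<noteq> 0"
  shows "I \<subseteq> {..<k} \<and> card I + 1 = m"
proof (rule ccontr)
  assume nc: "\<not> (I \<subseteq> {..<k} \<and> card I + 1 = m)"
  have "a [] (insert x I) = 0" if "x \<in> {..<k} - I" for x
  proof (rule ccontr)
    assume "a [] (insert x I) \<noteq> 0"
    then have "basis_idx k r m [] (insert x I)" using assms(1) by blast
    then have "I \<subseteq> {..<k}" "card (insert x I) = m" "finite I" using that
      by (auto simp: basis_idx_def dest: finite_subset)
    then show False using nc that by simp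
  qed
  moreover have "a [j] I = 0" if "j < r" for j
  proof (rule ccontr)
    assume "a [j] I \<noteq> 0"
    then have "basis_idx k r m [j] I" using assms(1) by blast
    then show False using nc by (auto simp: basis_idx_def)
  qed
  ultimately have "contr k r \<psi> a [] I = 0" by (simp add: ext_contr_def)
  then show False using assms(2) by simp
qed

lemma contr_support:
  assumes "\<forall>v J. a v J \<noteq> 0 \<longrightarrow> basis_idx k r m v J"
    and "contr k r \<psi> a w I \<noteq> 0"
  shows "set w \<subseteq> {..<r} \<and> I \<subseteq> {..<k} \<and> length w + card I + 1 = m"
  using assms
proof (induction w arbitrary: a m I)
  case Nil
  show ?case using contr_Nil_support[OF Nil.prems] by simp
next
  case (Cons j w)
  show ?case
  proof (cases "\<exists>j'<r. a (j' # j # w) I \<noteq> 0")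
    case True
    then obtain j' where "a (j' # j # w) I \<noteq> 0" by blast
    then have "basis_idx k r m (j' # j # w) I" using Cons.prems(1) by blast
    then show ?thesis by (auto simp: basis_idx_def)
  next
    case False
    then have nz: "contr k r \<psi> (\<lambda>v. a (j # v)) w I \<noteq> 0" using Cons.prems(2) by simp
    have tail: "\<forall>v J. a (j # v) J \<noteq> 0 \<longrightarrow> basis_idx k r (m - 1) v J"
    proof (intro allI impI)
      fix v J assume "a (j # v) J \<noteq> 0"
      then have "basis_idx k r m (j # v) J" using Cons.prems(1) by blast
      then show "basis_idx k r (m - 1) v J" by (auto simp: basis_idx_def)
    qed
    have "j < r"
    proof (rule ccontr)
      assume "\<not> j < r"
      then have "(\<lambda>v. a (j # v)) = (\<lambda>v J. 0)"
        using Cons.prems(1) by (fastforce simp: fun_eq_iff basis_idx_def)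
      then show False using nz contr_zero by metis
    qed
    with Cons.IH[OF tail nz] show ?thesis by auto
  qed
qed

definition lincomb ::
  "nat \<Rightarrow> (nat \<Rightarrow> 'a::comm_ring_1) \<Rightarrow> (nat \<Rightarrow> 'a form) \<Rightarrow> 'a form" where
  "lincomb d \<psi> D w I = (\<Sum>y<d. \<psi> y * D y w I)"

definition mul_vec :: "nat \<Rightarrow> nat \<Rightarrow> (nat \<Rightarrow> 'a::comm_ring_1 form) \<Rightarrow> 'a form" where
  "mul_vec k r D w J = (\<Sum>x<k. mul_u x (D x) w J) + (\<Sum>j<r. mul_w j (D (k + j)) w J)"

lemma sum_lessThan_add:
  fixes k r :: nat
  shows "(\<Sum>y<k + r. f y) = (\<Sum>x<k. f x) + (\<Sum>j<r. f (k + j) :: 'a::comm_monoid_add)"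
  by (induction r) (simp_all add: add.assoc)

lemma contr_mul_vec:
  "mul_vec k r (\<lambda>y. contr k r \<psi> (D y)) w I = lincomb (k + r) \<psi> D w I - contr k r \<psi> (mul_vec k r D) w I"
proof -
  have "contr k r \<psi> (mul_vec k r D) w I
      = (\<Sum>x<k. contr k r \<psi> (mul_u x (D x)) w I) + (\<Sum>j<r. contr k r \<psi> (mul_w j (D (k + j))) w I)"
    unfolding mul_vec_def contr_add by (simp add: contr_sum)
  also have "\<dots> = (\<Sum>x<k. \<psi> x * D x w I - mul_u x (contr k r \<psi> (D x)) w I)
      + (\<Sum>j<r. \<psi> (k + j) * D (k + j) w I - mul_w j (contr k r \<psi> (D (k + j))) w I)"
    by (simp add: contr_mul_u contr_mul_w)
  also have "\<dots> = lincomb (k + r) \<psi> D w I - mul_vec k r (\<lambda>y. contr k r \<psi> (D y)) w I"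
    by (simp add: lincomb_def mul_vec_def sum_lessThan_add sum_subtractf)
  finally show ?thesis by simp
qed

lemma sum_powers_eq_zero_imp_zero:
  fixes a :: "nat \<Rightarrow> 'a::field"
  assumes "inj_on a K" and "card K = m"
    and "\<forall>i\<in>K. (\<Sum>y<m. a i ^ y * c y) = 0"
  shows "\<forall>y<m. c y = 0"
proof -
  define p where "p = (\<Sum>y<m. monom (c y) y)"
  have coeff_p: "coeff p n = (if n < m then c n else 0)" for n
    unfolding p_def by (simp add: coeff_sum coeff_monom)
  have "p = 0"
  proof (rule ccontr)
    assume p: "p \<noteq> 0"
    then have "0 < m" by (cases m) (simp_all add: p_def)
    have "a ` K \<subseteq> {x. poly p x = 0}"
      using assms(3) by (auto simp: p_def poly_sum poly_monom mult.commute)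
    then have "card (a ` K) \<le> card {x. poly p x = 0}"
      using poly_roots_finite[OF p] by (rule card_mono[rotated])
    then have "m \<le> degree p"
      using card_image[OF assms(1)] assms(2) card_poly_roots_bound[OF p] by simp
    moreover have "degree p \<le> m - 1" by (rule degree_le) (auto simp: coeff_p)
    ultimately show False using \<open>0 < m\<close> by simp
  qed
  then show ?thesis using coeff_p by (metis coeff_0)
qed

section \<open>The message vector\<close>

type_synonym 'a symbols = "nat \<times> nat list \<times> nat set \<Rightarrow> 'a"

text \<open>The free symbols P (x, w, I) fill the U-components of the message vector; at the dependent
  indices the coefficient is chosen to cancel the word-length-zero part of mul_vec, and the
  W-components cancel the rest (lemma mul_vec_msg).\<close>

definition dependent_idx :: "nat \<Rightarrow> nat list \<Rightarrow> nat set \<Rightarrow> bool" where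
  "dependent_idx x w I \<longleftrightarrow> w = [] \<and> I \<noteq> {} \<and> x \<notin> I \<and> x < Min I"

definition msgU :: "nat \<Rightarrow> nat \<Rightarrow> nat \<Rightarrow> 'a::comm_ring_1 symbols \<Rightarrow> nat \<Rightarrow> 'a form" where
  "msgU k r \<mu> P x w I =
    (if \<not> basis_idx k r \<mu> w I then 0
     else if dependent_idx x w I
       then - (\<Sum>y\<in>I. ins_sign y (insert x I - {y}) * P (y, [], insert x I - {y}))
     else P (x, w, I))"

definition msg :: "nat \<Rightarrow> nat \<Rightarrow> nat \<Rightarrow> 'a::comm_ring_1 symbols \<Rightarrow> nat \<Rightarrow> 'a form" where
  "msg k r \<mu> P y =
    (if y < k then msgU k r \<mu> P y
     else if y < k + r then (\<lambda>w J. - (\<Sum>x<k. mul_u x (msgU k r \<mu> P x) ((y - k) # w) J))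
     else (\<lambda>w J. 0))"

lemma msg_u: "x < k \<Longrightarrow> msg k r \<mu> P x = msgU k r \<mu> P x"
  by (simp add: msg_def)

lemma msg_w: "j < r \<Longrightarrow> msg k r \<mu> P (k + j) w J = - (\<Sum>x<k. mul_u x (msgU k r \<mu> P x) (j # w) J)"
  by (simp add: msg_def)

lemma msgU_support: "msgU k r \<mu> P x w I \<noteq> 0 \<Longrightarrow> basis_idx k r \<mu> w I"
  by (auto simp: msgU_def split: if_splits)

lemma basis_idx_remove:
  assumes "x \<in> J" and "basis_idx k r m w (J - {x})" and "x < k"
  shows "basis_idx k r (Suc m) w J"
proof -
  have "finite J" using assms(2) finite_subset[of "J - {x}" "{..<k}"] by (simp add: basis_idx_def)
  then have "Suc (card (J - {x})) = card J" using assms(1) by (rule card_Suc_Diff1)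
  then show ?thesis using assms by (auto simp: basis_idx_def)
qed

lemma msg_support: "msg k r \<mu> P y w J \<noteq> 0 \<Longrightarrow> basis_idx k r \<mu> w J"
proof -
  assume nz: "msg k r \<mu> P y w J \<noteq> 0"
  consider "y < k" | "k \<le> y" "y < k + r" | "k + r \<le> y" by linarith
  then show ?thesis
  proof cases
    case 1
    then show ?thesis using nz msgU_support by (simp add: msg_u)
  next
    case 2
    then have "(\<Sum>x<k. mul_u x (msgU k r \<mu> P x) ((y - k) # w) J) \<noteq> 0"
      using nz by (simp add: msg_def)
    then obtain x where "x < k" "mul_u x (msgU k r \<mu> P x) ((y - k) # w) J \<noteq> 0"
      by (meson lessThan_iff sum.not_neutral_contains_not_neutral)
    then have "x \<in> J" "msgU k r \<mu> P x ((y - k) # w) (J - {x}) \<noteq> 0"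
      by (auto simp: mul_u_def ext_wedge_def split: if_splits)
    then have "x \<in> J" "basis_idx k r \<mu> ((y - k) # w) (J - {x})" by (auto intro: msgU_support)
    then have "basis_idx k r (Suc \<mu>) ((y - k) # w) J" using \<open>x < k\<close> by (rule basis_idx_remove)
    then show ?thesis by (simp add: basis_idx_def)
  next
    case 3
    then show ?thesis using nz by (simp add: msg_def)
  qed
qed

lemma ext_wedge_msgU_Nil_support:
  assumes "ext_wedge x (msgU k r \<mu> P x []) J \<noteq> 0" and "x < k"
  shows "J \<subseteq> {..<k} \<and> card J = \<mu> + 1"
proof -
  have "x \<in> J" "msgU k r \<mu> P x [] (J - {x}) \<noteq> 0"
    using assms(1) by (auto simp: ext_wedge_def split: if_splits)
  then have "basis_idx k r (Suc \<mu>) [] J" using assms(2) by (auto intro: basis_idx_remove msgU_support)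
  then show ?thesis by (simp add: basis_idx_def)
qed

lemma sum_ext_wedge_msgU_Nil:
  assumes "1 \<le> \<mu>"
  shows "(\<Sum>x<k. ext_wedge x (msgU k r \<mu> P x []) J) = 0"
proof (cases "J \<subseteq> {..<k} \<and> card J = \<mu> + 1")
  case False
  have "ext_wedge x (msgU k r \<mu> P x []) J = 0" if "x < k" for x
    using ext_wedge_msgU_Nil_support[OF _ that] False by blast
  then show ?thesis by simp
next
  case True
  then have Jk: "J \<subseteq> {..<k}" and cJ: "card J = \<mu> + 1" by auto
  have fJ: "finite J" using Jk finite_subset by blast
  have bJ: "basis_idx k r \<mu> [] (J - {x})" if "x \<in> J" for x
    using Jk cJ fJ that by (auto simp: basis_idx_def card_Diff_singleton)
  define m where "m = Min J"
  have "J \<noteq> {}" using cJ by auto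
  then have mJ: "m \<in> J" using Min_in[OF fJ] by (simp add: m_def)
  have m_le: "\<forall>z\<in>J. m \<le> z" using fJ by (simp add: m_def)
  have "(\<Sum>x<k. ext_wedge x (msgU k r \<mu> P x []) J) = (\<Sum>x\<in>J. ins_sign x (J - {x}) * msgU k r \<mu> P x [] (J - {x}))"
    using sum.inter_restrict[of "{..<k}" "\<lambda>x. ins_sign x (J - {x}) * msgU k r \<mu> P x [] (J - {x})" J] Jk
    by (simp add: ext_wedge_def Int_absorb1)
  also have "\<dots> = ins_sign m (J - {m}) * msgU k r \<mu> P m [] (J - {m})
      + (\<Sum>x\<in>J - {m}. ins_sign x (J - {x}) * msgU k r \<mu> P x [] (J - {x}))"
    using sum.remove[OF fJ mJ] by simp
  also have "ins_sign m (J - {m}) * msgU k r \<mu> P m [] (J - {m})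
      = - (\<Sum>y\<in>J - {m}. ins_sign y (J - {y}) * P (y, [], J - {y}))"
  proof -
    have "card (J - {m}) = \<mu>" using cJ fJ mJ by (simp add: card_Diff_singleton)
    then have "J - {m} \<noteq> {}" using assms by (metis card.empty not_one_le_zero)
    then have "m < Min (J - {m})" using fJ m_le Min_in[of "J - {m}"] by force
    then have "dependent_idx m [] (J - {m})" using \<open>J - {m} \<noteq> {}\<close> by (simp add: dependent_idx_def)
    moreover have "insert m (J - {m}) = J" using mJ by auto
    moreover have "ins_sign m (J - {m}) = (1::'a)" using m_le by (intro ins_sign_Min) auto
    ultimately show ?thesis using bJ[OF mJ] by (simp add: msgU_def)
  qed
  also have "(\<Sum>x\<in>J - {m}. ins_sign x (J - {x}) * msgU k r \<mu> P x [] (J - {x}))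
      = (\<Sum>y\<in>J - {m}. ins_sign y (J - {y}) * P (y, [], J - {y}))"
  proof (rule sum.cong[OF refl])
    fix x assume x: "x \<in> J - {m}"
    then have "Min (J - {x}) \<le> m" using fJ mJ by (simp add: Min_le)
    moreover have "m < x" using x m_le by force
    ultimately have "\<not> dependent_idx x [] (J - {x})" by (auto simp: dependent_idx_def)
    then show "ins_sign x (J - {x}) * msgU k r \<mu> P x [] (J - {x}) = ins_sign x (J - {x}) * P (x, [], J - {x})"
      using bJ x by (simp add: msgU_def)
  qed
  finally show ?thesis by simp
qed

lemma mul_vec_msg:
  assumes "1 \<le> \<mu>"
  shows "mul_vec k r (msg k r \<mu> P) w J = 0"
proof (cases w)
  case Nil
  then show ?thesis
    using sum_ext_wedge_msgU_Nil[OF assms] by (simp add: mul_vec_def mul_u_def mul_w_def msg_u)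
next
  case (Cons j w')
  have U: "(\<Sum>x<k. mul_u x (msg k r \<mu> P x) w J) = (\<Sum>x<k. mul_u x (msgU k r \<mu> P x) (j # w') J)"
    using Cons by (simp add: msg_u)
  have W: "(\<Sum>j'<r. mul_w j' (msg k r \<mu> P (k + j')) w J) = (if j < r then msg k r \<mu> P (k + j) w' J else 0)"
    using Cons by (simp add: mul_w_def)
  show ?thesis
  proof (cases "j < r")
    case True
    then show ?thesis using U W by (simp add: mul_vec_def msg_w)
  next
    case False
    have z: "msgU k r \<mu> P x (j # w') J' = 0" for x J'
      using msgU_support[of k r \<mu> P x "j # w'" J'] False by (auto simp: basis_idx_def)
    then have "(\<Sum>x<k. mul_u x (msgU k r \<mu> P x) (j # w') J) = 0"
      by (intro sum.neutral) (simp add: mul_u_def ext_wedge_def)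
    then show ?thesis using U W False by (simp add: mul_vec_def)
  qed
qed

lemma msgU_lincomb:
  "msgU k r \<mu> (\<lambda>s. c1 * P1 s + c2 * P2 s) x w I = c1 * msgU k r \<mu> P1 x w I + c2 * msgU k r \<mu> P2 x w I"
  by (simp add: msgU_def sum.distrib sum_distrib_left algebra_simps)

lemma msg_lincomb:
  "msg k r \<mu> (\<lambda>s. c1 * P1 s + c2 * P2 s) y w I = c1 * msg k r \<mu> P1 y w I + c2 * msg k r \<mu> P2 y w I"
proof -
  have "mul_u x (msgU k r \<mu> (\<lambda>s. c1 * P1 s + c2 * P2 s) x) v J
      = c1 * mul_u x (msgU k r \<mu> P1 x) v J + c2 * mul_u x (msgU k r \<mu> P2 x) v J" for x v J
    by (simp add: mul_u_def ext_wedge_def msgU_lincomb algebra_simps)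
  then show ?thesis
    by (simp add: msg_def msgU_lincomb sum.distrib sum_distrib_left algebra_simps)
qed

lemma lincomb_msg_lincomb:
  "lincomb d \<psi> (msg k r \<mu> (\<lambda>s. c1 * P1 s + c2 * P2 s)) w I
    = c1 * lincomb d \<psi> (msg k r \<mu> P1) w I + c2 * lincomb d \<psi> (msg k r \<mu> P2) w I"
  by (simp add: lincomb_def msg_lincomb sum.distrib sum_distrib_left algebra_simps)

section \<open>Data recovery and exact repair\<close>

lemma msgU_eq_zero_step:
  fixes a :: "nat \<Rightarrow> 'a::field"
  assumes "inj_on a K" and "card K = k"
    and nodes: "\<forall>i\<in>K. lincomb (k + r) (\<lambda>y. a i ^ y) (msg k r \<mu> P) w I = 0"
    and longer: "\<And>x j J. x < k \<Longrightarrow> j < r \<Longrightarrow> msgU k r \<mu> P x (j # w) J = 0"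
  shows "\<forall>x<k. msgU k r \<mu> P x w I = 0"
proof (rule sum_powers_eq_zero_imp_zero[OF assms(1,2)], intro ballI)
  fix i assume "i \<in> K"
  have "msg k r \<mu> P (k + j) w I = 0" if "j < r" for j
  proof -
    have "mul_u x (msgU k r \<mu> P x) (j # w) I = 0" if "x < k" for x
      using longer[OF that \<open>j < r\<close>] by (simp add: mul_u_def ext_wedge_def)
    then show ?thesis using \<open>j < r\<close> by (simp add: msg_w sum.neutral)
  qed
  then have "lincomb (k + r) (\<lambda>y. a i ^ y) (msg k r \<mu> P) w I = (\<Sum>y<k. a i ^ y * msgU k r \<mu> P y w I)"
    by (simp add: lincomb_def sum_lessThan_add msg_u)
  then show "(\<Sum>y<k. a i ^ y * msgU k r \<mu> P y w I) = 0" using nodes \<open>i \<in> K\<close> by simp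
qed

lemma msgU_eq_zero_if_nodes:
  fixes a :: "nat \<Rightarrow> 'a::field"
  assumes "inj_on a K" and "card K = k"
    and nodes: "\<forall>i\<in>K. \<forall>w I. basis_idx k r \<mu> w I \<longrightarrow>
      lincomb (k + r) (\<lambda>y. a i ^ y) (msg k r \<mu> P) w I = 0"
    and "x < k"
  shows "msgU k r \<mu> P x w I = 0"
proof -
  have "\<forall>(w::nat list) I x. x < k \<longrightarrow> Suc \<mu> \<le> length w + t \<longrightarrow> msgU k r \<mu> P x w I = 0" for t
  proof (induction t)
    case 0
    show ?case using msgU_support by (fastforce simp: basis_idx_def)
  next
    case (Suc t)
    show ?case
    proof (intro allI impI)
      fix w :: "nat list" and I x assume "x < k" and len: "Suc \<mu> \<le> length w + Suc t"
      show "msgU k r \<mu> P x w I = 0"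
      proof (cases "Suc \<mu> \<le> length w + t \<or> \<not> basis_idx k r \<mu> w I")
        case True
        then show ?thesis using Suc.IH \<open>x < k\<close> msgU_support by blast
      next
        case False
        then have "msgU k r \<mu> P x' (j # w) J = 0" if "x' < k" for x' j J using Suc.IH that len by simp
        then show ?thesis using msgU_eq_zero_step[OF assms(1,2)] nodes False \<open>x < k\<close> by blast
      qed
    qed
  qed
  from this[of "Suc \<mu>"] show ?thesis using \<open>x < k\<close> by simp
qed

lemma contr_eq_zero_if_zero_off_first:
  assumes "0 < k" and "\<psi> 0 = 1" and "\<forall>w I. 0 \<notin> I \<longrightarrow> contr k r \<psi> c w I = 0"
  shows "contr k r \<psi> c w I = 0"
proof -
  have "mul_u 0 (contr k r \<psi> c) = (\<lambda>w J. 0)"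
    using assms(3) by (auto simp: fun_eq_iff mul_u_def ext_wedge_def)
  moreover have "mul_u 0 (contr k r \<psi> (contr k r \<psi> c)) w I = 0"
    by (simp add: mul_u_def ext_wedge_def contr_contr)
  ultimately show ?thesis
    using contr_mul_u[OF assms(1), of r \<psi> "contr k r \<psi> c" w I] assms(2) by (simp add: contr_zero)
qed

lemma lincomb_eq_zero_if_helpers:
  fixes a :: "nat \<Rightarrow> 'a::field"
  assumes "inj_on a H" and "card H = k + r" and "0 < k" and "1 \<le> \<mu>"
    and helpers: "\<forall>h\<in>H. \<forall>w I. basis_idx k r (\<mu> - 1) w I \<and> 0 \<notin> I \<longrightarrow>
      contr k r (\<lambda>y. b ^ y) (lincomb (k + r) (\<lambda>y. a h ^ y) (msg k r \<mu> P)) w I = 0"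
  shows "lincomb (k + r) (\<lambda>y. b ^ y) (msg k r \<mu> P) w I = 0"
proof -
  define \<psi> where "\<psi> y = b ^ y" for y
  define D where "D = msg k r \<mu> P"
  have off_first: "contr k r \<psi> (D y) w I = 0" if "y < k + r" and "0 \<notin> I" for y w I
  proof (cases "basis_idx k r (\<mu> - 1) w I")
    case True
    have "contr k r \<psi> (lincomb (k + r) (\<lambda>y. a h ^ y) D) w I = (\<Sum>y<k + r. a h ^ y * contr k r \<psi> (D y) w I)"
      for h
      unfolding lincomb_def[abs_def] by (simp add: contr_sum contr_scale)
    moreover have "contr k r \<psi> (lincomb (k + r) (\<lambda>y. a h ^ y) D) w I = 0" if "h \<in> H" for h
      using helpers that True \<open>0 \<notin> I\<close> by (simp add: \<psi>_def[abs_def] D_def)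
    ultimately have "\<forall>h\<in>H. (\<Sum>y<k + r. a h ^ y * contr k r \<psi> (D y) w I) = 0" by simp
    then show ?thesis
      using sum_powers_eq_zero_imp_zero[OF assms(1,2), of "\<lambda>y. contr k r \<psi> (D y) w I"] that by blast
  next
    case False
    show ?thesis
    proof (rule ccontr)
      assume nz: "contr k r \<psi> (D y) w I \<noteq> 0"
      have "\<forall>v J. D y v J \<noteq> 0 \<longrightarrow> basis_idx k r \<mu> v J" using msg_support by (auto simp: D_def)
      from contr_support[OF this nz] have "basis_idx k r (\<mu> - 1) w I" by (auto simp: basis_idx_def)
      then show False using False by simp
    qed
  qed
  have contr_D: "contr k r \<psi> (D y) w I = 0" if "y < k + r" for y w I
    by (rule contr_eq_zero_if_zero_off_first[OF assms(3)]) (simp_all add: \<psi>_def off_first that)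
  have "mul_u x (contr k r \<psi> (D x)) w I = 0" if "x < k" for x
    using contr_D that by (simp add: mul_u_def ext_wedge_def)
  moreover have "mul_w j (contr k r \<psi> (D (k + j))) w I = 0" if "j < r" for j
    using contr_D that by (simp add: mul_w_def split: list.split)
  ultimately have "mul_vec k r (\<lambda>y. contr k r \<psi> (D y)) w I = 0"
    by (simp add: mul_vec_def)
  moreover have "mul_vec k r D = (\<lambda>w I. 0)" unfolding D_def by (intro ext mul_vec_msg[OF assms(4)])
  ultimately show ?thesis using contr_mul_vec[of k r \<psi> D w I] by (simp add: contr_zero \<psi>_def[abs_def] D_def)
qed

section \<open>Counting coordinates\<close>

lemma card_words_times_subsets:
  assumes "finite C"
  shows "card {(w, I). set w \<subseteq> {..<r} \<and> I \<subseteq> C \<and> length w + card I = m}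
           = (\<Sum>l\<le>m. r ^ l * (card C choose (m - l)))"
    and "finite {(w, I). set w \<subseteq> {..<r} \<and> I \<subseteq> C \<and> length w + card I = m}"
proof -
  define L where "L l = {w. set w \<subseteq> {..<r} \<and> length w = l}" for l
  define S where "S l = {I. I \<subseteq> C \<and> card I = m - l}" for l
  have eq: "{(w, I). set w \<subseteq> {..<r} \<and> I \<subseteq> C \<and> length w + card I = m} = (\<Union>l\<in>{..m}. L l \<times> S l)"
    by (auto simp: L_def S_def)
  have fin_L: "finite (L l)" for l unfolding L_def by (rule finite_lists_length_eq) simp
  have fin_S: "finite (S l)" for l unfolding S_def using assms by (auto intro: finite_subset[of _ "Pow C"])
  have card_L: "card (L l) = r ^ l" for l unfolding L_def using card_lists_length_eq[of "{..<r}" l] by simp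
  have card_S: "card (S l) = card C choose (m - l)" for l unfolding S_def by (rule n_subsets[OF assms])
  have "card (\<Union>l\<in>{..m}. L l \<times> S l) = (\<Sum>l\<le>m. card (L l \<times> S l))"
    using fin_L fin_S by (intro card_UN_disjoint) (auto simp: L_def)
  then show "card {(w, I). set w \<subseteq> {..<r} \<and> I \<subseteq> C \<and> length w + card I = m}
      = (\<Sum>l\<le>m. r ^ l * (card C choose (m - l)))"
    unfolding eq by (simp add: card_cartesian_product card_L card_S)
  show "finite {(w, I). set w \<subseteq> {..<r} \<and> I \<subseteq> C \<and> length w + card I = m}"
    unfolding eq by (auto simp: fin_L fin_S)
qed

definition basis_set :: "nat \<Rightarrow> nat \<Rightarrow> nat \<Rightarrow> (nat list \<times> nat set) set" where
  "basis_set k r \<mu> = {(w, I). basis_idx k r \<mu> w I}"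

definition repair_set :: "nat \<Rightarrow> nat \<Rightarrow> nat \<Rightarrow> (nat list \<times> nat set) set" where
  "repair_set k r \<mu> = {(w, I). basis_idx k r (\<mu> - 1) w I \<and> 0 \<notin> I}"

definition free_set :: "nat \<Rightarrow> nat \<Rightarrow> nat \<Rightarrow> (nat \<times> nat list \<times> nat set) set" where
  "free_set k r \<mu> = {(x, w, I). x < k \<and> basis_idx k r \<mu> w I \<and> \<not> dependent_idx x w I}"

lemma sum_atMost_rev:
  fixes f :: "nat \<Rightarrow> 'a::comm_monoid_add"
  shows "(\<Sum>l\<le>m. f l) = (\<Sum>l = 0..m. f (m - l))"
  using sum.atLeastAtMost_rev[of f 0 m] by (simp add: atLeast0AtMost)

lemma
  shows card_basis_set: "card (basis_set k r \<mu>) = alpha_p k (k + r) \<mu>"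
    and finite_basis_set: "finite (basis_set k r \<mu>)"
proof -
  have eq: "basis_set k r \<mu> = {(w, I). set w \<subseteq> {..<r} \<and> I \<subseteq> {..<k} \<and> length w + card I = \<mu>}"
    by (simp add: basis_set_def basis_idx_def)
  show "finite (basis_set k r \<mu>)" unfolding eq by (rule card_words_times_subsets) simp
  have "card (basis_set k r \<mu>) = (\<Sum>l\<le>\<mu>. r ^ l * (k choose (\<mu> - l)))"
    unfolding eq using card_words_times_subsets(1)[of "{..<k}" r \<mu>] by simp
  also have "\<dots> = alpha_p k (k + r) \<mu>"
    unfolding sum_atMost_rev alpha_p_def by (intro sum.cong) auto
  finally show "card (basis_set k r \<mu>) = alpha_p k (k + r) \<mu>" .
qed

lemma
  assumes "1 \<le> \<mu>"
  shows card_repair_set: "card (repair_set k r \<mu>) = beta_p k (k + r) \<mu>"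
    and finite_repair_set: "finite (repair_set k r \<mu>)"
proof -
  have "(I \<subseteq> {..<k} \<and> 0 \<notin> I) \<longleftrightarrow> I \<subseteq> {1..<k}" for I :: "nat set"
    by (auto simp: subset_iff Suc_le_eq intro: gr0I)
  then have "basis_idx k r (\<mu> - 1) w I \<and> 0 \<notin> I
      \<longleftrightarrow> set w \<subseteq> {..<r} \<and> I \<subseteq> {1..<k} \<and> length w + card I = \<mu> - 1" for w I
    unfolding basis_idx_def by blast
  then have eq: "repair_set k r \<mu>
      = {(w, I). set w \<subseteq> {..<r} \<and> I \<subseteq> {1..<k} \<and> length w + card I = \<mu> - 1}"
    by (simp add: repair_set_def)
  show "finite (repair_set k r \<mu>)" unfolding eq by (rule card_words_times_subsets) simp
  have "card (repair_set k r \<mu>) = (\<Sum>l\<le>\<mu> - 1. r ^ l * ((k - 1) choose (\<mu> - 1 - l)))"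
    unfolding eq using card_words_times_subsets(1)[of "{1..<k}" r "\<mu> - 1"] by simp
  also have "\<dots> = (\<Sum>l\<le>\<mu>. r ^ l * (if \<mu> - l = 0 then 0 else (k - 1) choose (\<mu> - l - 1)))"
  proof -
    have "{..\<mu>} = insert \<mu> {..\<mu> - 1}" using assms by auto
    then have "(\<Sum>l\<le>\<mu>. r ^ l * (if \<mu> - l = 0 then 0 else (k - 1) choose (\<mu> - l - 1)))
        = (\<Sum>l\<le>\<mu> - 1. r ^ l * (if \<mu> - l = 0 then 0 else (k - 1) choose (\<mu> - l - 1)))"
      using assms by (simp add: sum.insert)
    also have "\<dots> = (\<Sum>l\<le>\<mu> - 1. r ^ l * ((k - 1) choose (\<mu> - 1 - l)))"
      using assms by (intro sum.cong) auto
    finally show ?thesis by simp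
  qed
  also have "\<dots> = beta_p k (k + r) \<mu>"
    unfolding sum_atMost_rev beta_p_def by (intro sum.cong) auto
  finally show "card (repair_set k r \<mu>) = beta_p k (k + r) \<mu>" .
qed

lemma card_dependent_le:
  "card {(x, w, I). x < k \<and> basis_idx k r \<mu> w I \<and> dependent_idx x w I} \<le> k choose (\<mu> + 1)"
proof -
  let ?Dep = "{(x, w, I). x < k \<and> basis_idx k r \<mu> w I \<and> dependent_idx x w I}"
  let ?J = "{J. J \<subseteq> {..<k} \<and> card J = \<mu> + 1}"
  let ?split = "\<lambda>J. (Min J, [] :: nat list, J - {Min J})"
  have "?Dep \<subseteq> ?split ` ?J"
  proof
    fix t assume "t \<in> ?Dep"
    then obtain x w I where t: "t = (x, w, I)" "x < k" "basis_idx k r \<mu> w I" "dependent_idx x w I"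
      by auto
    then have w: "w = []" and I: "I \<noteq> {}" "x \<notin> I" "x < Min I" "I \<subseteq> {..<k}" "card I = \<mu>"
      by (auto simp: dependent_idx_def basis_idx_def)
    have "finite I" using I(4) finite_subset by blast
    then have "t = ?split (insert x I)" using t(1) w I(1-3) by (simp add: Min_insert)
    moreover have "insert x I \<in> ?J" using \<open>finite I\<close> t(2) I(2,4,5) by auto
    ultimately show "t \<in> ?split ` ?J" by (rule image_eqI)
  qed
  moreover have "finite ?J" by (rule finite_subset[of _ "Pow {..<k}"]) auto
  ultimately have "card ?Dep \<le> card (?split ` ?J)" by (intro card_mono) auto
  also have "\<dots> \<le> card ?J" by (rule card_image_le) fact
  also have "card ?J = k choose (\<mu> + 1)" using n_subsets[of "{..<k}" "\<mu> + 1"] by simp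
  finally show ?thesis .
qed

lemma
  shows card_free_set_ge: "nat (F_p k (k + r) \<mu>) \<le> card (free_set k r \<mu>)"
    and finite_free_set: "finite (free_set k r \<mu>)"
proof -
  let ?All = "{..<k} \<times> basis_set k r \<mu>"
  let ?Dep = "{(x, w, I). x < k \<and> basis_idx k r \<mu> w I \<and> dependent_idx x w I}"
  have fin: "finite ?All" using finite_basis_set by simp
  have eq: "free_set k r \<mu> = ?All - ?Dep" by (auto simp: free_set_def basis_set_def)
  have sub: "?Dep \<subseteq> ?All" by (auto simp: basis_set_def)
  show "finite (free_set k r \<mu>)" unfolding eq using fin by simp
  have "F_p k (k + r) \<mu> = int (k * alpha_p k (k + r) \<mu>) - int (k choose (\<mu> + 1))"
    by (simp add: F_p_def alpha_p_def sum_distrib_left mult.assoc)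
  moreover have "card (free_set k r \<mu>) = k * alpha_p k (k + r) \<mu> - card ?Dep"
    unfolding eq card_Diff_subset[OF finite_subset[OF sub fin] sub]
    by (simp add: card_cartesian_product card_basis_set)
  ultimately show "nat (F_p k (k + r) \<mu>) \<le> card (free_set k r \<mu>)"
    using card_dependent_le[of k r \<mu>] by linarith
qed

section \<open>The code\<close>

definition enum :: "'b set \<Rightarrow> nat \<Rightarrow> 'b" where
  "enum S = (SOME g. bij_betw g {0..<card S} S)"

lemma bij_betw_enum: "finite S \<Longrightarrow> bij_betw (enum S) {0..<card S} S"
  unfolding enum_def by (drule ex_bij_betw_nat_finite) (rule someI_ex[where P = "\<lambda>g. bij_betw g {0..<card S} S"])

lemma enum_inv_into:
  assumes "finite S" and "s \<in> S"
  shows "inv_into {0..<card S} (enum S) s < card S" and "enum S (inv_into {0..<card S} (enum S) s) = s"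
  using bij_betw_enum[OF assms(1)] assms(2)
  by (auto simp: bij_betw_def intro: inv_into_into[of s _ "{0..<card S}", simplified] f_inv_into_f)

definition file_symbols :: "nat \<Rightarrow> nat \<Rightarrow> nat \<Rightarrow> (nat \<Rightarrow> 'a) \<Rightarrow> 'a symbols" where
  "file_symbols k r \<mu> x s = x (inv_into {0..<card (free_set k r \<mu>)} (enum (free_set k r \<mu>)) s)"

definition node_form ::
  "nat \<Rightarrow> nat \<Rightarrow> nat \<Rightarrow> (nat \<Rightarrow> 'a::comm_ring_1) \<Rightarrow> nat \<Rightarrow> (nat \<Rightarrow> 'a) \<Rightarrow> 'a form" where
  "node_form k r \<mu> a i x = lincomb (k + r) (\<lambda>y. a i ^ y) (msg k r \<mu> (file_symbols k r \<mu> x))"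

definition form_of_coords :: "nat \<Rightarrow> nat \<Rightarrow> nat \<Rightarrow> (nat \<Rightarrow> 'a::zero) \<Rightarrow> 'a form" where
  "form_of_coords k r \<mu> v w I =
    (if (w, I) \<in> basis_set k r \<mu>
     then v (inv_into {0..<card (basis_set k r \<mu>)} (enum (basis_set k r \<mu>)) (w, I)) else 0)"

definition det_enc ::
  "nat \<Rightarrow> nat \<Rightarrow> nat \<Rightarrow> (nat \<Rightarrow> 'a::comm_ring_1) \<Rightarrow> nat \<Rightarrow> (nat \<Rightarrow> 'a) \<Rightarrow> nat \<Rightarrow> 'a" where
  "det_enc k r \<mu> a i x j =
    node_form k r \<mu> a i x (fst (enum (basis_set k r \<mu>) j)) (snd (enum (basis_set k r \<mu>) j))"

definition det_rep ::
  "nat \<Rightarrow> nat \<Rightarrow> nat \<Rightarrow> (nat \<Rightarrow> 'a::comm_ring_1) \<Rightarrow> nat \<Rightarrow> nat \<Rightarrow> (nat \<Rightarrow> 'a) \<Rightarrow> nat \<Rightarrow> 'a" where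
  "det_rep k r \<mu> a f h v j =
    contr k r (\<lambda>y. a f ^ y) (form_of_coords k r \<mu> v)
      (fst (enum (repair_set k r \<mu>) j)) (snd (enum (repair_set k r \<mu>) j))"

lemma node_form_lincomb:
  "node_form k r \<mu> a i (\<lambda>t. c1 * x t + c2 * y t) w I = c1 * node_form k r \<mu> a i x w I + c2 * node_form k r \<mu> a i y w I"
proof -
  have "file_symbols k r \<mu> (\<lambda>t. c1 * x t + c2 * y t) = (\<lambda>s. c1 * file_symbols k r \<mu> x s + c2 * file_symbols k r \<mu> y s)"
    by (simp add: file_symbols_def fun_eq_iff)
  then show ?thesis by (simp add: node_form_def lincomb_msg_lincomb)
qed

lemma node_form_diff:
  "node_form k r \<mu> a i (\<lambda>t. x t - y t) w I = node_form k r \<mu> a i x w I - node_form k r \<mu> a i y w I"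
  using node_form_lincomb[of k r \<mu> a i 1 x "-1" y w I] by simp

lemma node_form_support:
  assumes "node_form k r \<mu> a i x w I \<noteq> 0"
  shows "(w, I) \<in> basis_set k r \<mu>"
proof -
  obtain y where "msg k r \<mu> (file_symbols k r \<mu> x) y w I \<noteq> 0"
    using assms sum.not_neutral_contains_not_neutral by (fastforce simp: node_form_def lincomb_def)
  then show ?thesis by (simp add: basis_set_def msg_support)
qed

lemma form_of_coords_content:
  "form_of_coords k r \<mu> (Defs.content (card (basis_set k r \<mu>)) (det_enc k r \<mu> a) i x) = node_form k r \<mu> a i x"
proof (intro ext)
  fix w I
  show "form_of_coords k r \<mu> (Defs.content (card (basis_set k r \<mu>)) (det_enc k r \<mu> a) i x) w I = node_form k r \<mu> a i x w I"
  proof (cases "(w, I) \<in> basis_set k r \<mu>")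
    case True
    then show ?thesis
      using enum_inv_into[OF finite_basis_set True] by (simp add: form_of_coords_def Defs.content_def det_enc_def)
  next
    case False
    then show ?thesis using node_form_support[of k r \<mu> a i x w I] by (auto simp: form_of_coords_def)
  qed
qed

lemma data_recovery_node_forms:
  fixes a :: "nat \<Rightarrow> 'a::field"
  assumes "inj_on a K" and "card K = k" and "F \<le> card (free_set k r \<mu>)"
    and "x \<in> files F" and "y \<in> files F"
    and nodes: "\<forall>i\<in>K. node_form k r \<mu> a i x = node_form k r \<mu> a i y"
  shows "x = y"
proof
  fix t
  let ?z = "\<lambda>t. x t - y t"
  have "node_form k r \<mu> a i ?z w I = 0" if "i \<in> K" for i w I
    using nodes that by (simp add: node_form_diff)
  then have msgU_z: "msgU k r \<mu> (file_symbols k r \<mu> ?z) x0 w I = 0" if "x0 < k" for x0 w I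
    using msgU_eq_zero_if_nodes[OF assms(1,2) _ that] by (simp add: node_form_def)
  show "x t = y t"
  proof (cases "t < F")
    case True
    let ?S = "free_set k r \<mu>"
    have t: "t \<in> {0..<card ?S}" using True assms(3) by simp
    obtain x0 w I where s: "enum ?S t = (x0, w, I)" by (metis prod_cases3)
    have "enum ?S t \<in> ?S" using bij_betw_apply[OF bij_betw_enum[OF finite_free_set] t] .
    then have "x0 < k" using s by (simp add: free_set_def)
    have "msgU k r \<mu> (file_symbols k r \<mu> ?z) x0 w I = file_symbols k r \<mu> ?z (x0, w, I)"
      using \<open>enum ?S t \<in> ?S\<close> s by (auto simp: free_set_def msgU_def)
    also have "\<dots> = x t - y t"
      using bij_betw_enum[OF finite_free_set] t unfolding file_symbols_def s[symmetric]
      by (simp add: bij_betw_def inv_into_f_f)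
    finally show ?thesis using msgU_z \<open>x0 < k\<close> by simp
  next
    case False
    then show ?thesis using assms(4,5) by (simp add: files_def)
  qed
qed

lemma exact_repair_node_forms:
  fixes a :: "nat \<Rightarrow> 'a::field"
  assumes "inj_on a H" and "card H = k + r" and "0 < k" and "1 \<le> \<mu>"
    and helpers: "\<forall>h\<in>H. \<forall>(w, I)\<in>repair_set k r \<mu>.
      contr k r (\<lambda>y. a f ^ y) (node_form k r \<mu> a h x) w I = contr k r (\<lambda>y. a f ^ y) (node_form k r \<mu> a h y) w I"
  shows "node_form k r \<mu> a f x = node_form k r \<mu> a f y"
proof (intro ext)
  fix w I
  let ?z = "\<lambda>t. x t - y t"
  have "node_form k r \<mu> a h ?z = (\<lambda>w I. node_form k r \<mu> a h x w I - node_form k r \<mu> a h y w I)" for h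
    by (simp add: fun_eq_iff node_form_diff)
  then have "\<forall>h\<in>H. \<forall>w I. basis_idx k r (\<mu> - 1) w I \<and> 0 \<notin> I \<longrightarrow>
      contr k r (\<lambda>y. a f ^ y) (lincomb (k + r) (\<lambda>y. a h ^ y) (msg k r \<mu> (file_symbols k r \<mu> ?z))) w I = 0"
    using helpers by (auto simp: contr_diff repair_set_def simp flip: node_form_def)
  from lincomb_eq_zero_if_helpers[OF assms(1-4) this]
  have "node_form k r \<mu> a f ?z w I = 0" by (simp add: node_form_def)
  then show "node_form k r \<mu> a f x w I = node_form k r \<mu> a f y w I" by (simp add: node_form_diff)
qed

lemma det_code_regen_code:
  fixes a :: "nat \<Rightarrow> 'a::field"
  assumes "inj_on a {..<n}" and "0 < k" and "1 \<le> \<mu>" and "F \<le> card (free_set k r \<mu>)"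
  shows "regen_code n k (k + r) (card (basis_set k r \<mu>)) (card (repair_set k r \<mu>)) F
           (det_enc k r \<mu> a) (det_rep k r \<mu> a)"
  unfolding regen_code_def
proof (intro conjI allI impI ballI)
  fix K x y
  assume K: "K \<subseteq> {0..<n} \<and> card K = k" and "x \<in> files F" "y \<in> files F"
    and "\<forall>i\<in>K. Defs.content (card (basis_set k r \<mu>)) (det_enc k r \<mu> a) i x
              = Defs.content (card (basis_set k r \<mu>)) (det_enc k r \<mu> a) i y"
  then have "\<forall>i\<in>K. node_form k r \<mu> a i x = node_form k r \<mu> a i y"
    by (metis form_of_coords_content)
  moreover have "inj_on a K" using assms(1) K by (metis atLeast0LessThan inj_on_subset)
  ultimately show "x = y" using data_recovery_node_forms K assms(4) \<open>x \<in> files F\<close> \<open>y \<in> files F\<close> by blast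
next
  fix f H x y
  let ?\<beta> = "card (repair_set k r \<mu>)"
  assume fH: "f < n \<and> H \<subseteq> {0..<n} - {f} \<and> card H = k + r" and "x \<in> files F" "y \<in> files F"
    and msgs: "\<forall>h\<in>H. \<forall>j<?\<beta>.
      det_rep k r \<mu> a f h (Defs.content (card (basis_set k r \<mu>)) (det_enc k r \<mu> a) h x) j
      = det_rep k r \<mu> a f h (Defs.content (card (basis_set k r \<mu>)) (det_enc k r \<mu> a) h y) j"
  have "\<forall>h\<in>H. \<forall>(w, I)\<in>repair_set k r \<mu>.
      contr k r (\<lambda>y. a f ^ y) (node_form k r \<mu> a h x) w I = contr k r (\<lambda>y. a f ^ y) (node_form k r \<mu> a h y) w I"
  proof (intro ballI, clarify)
    fix h w I assume "h \<in> H" and wI: "(w, I) \<in> repair_set k r \<mu>"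
    note j = enum_inv_into[OF finite_repair_set[OF assms(3)] wI]
    show "contr k r (\<lambda>y. a f ^ y) (node_form k r \<mu> a h x) w I = contr k r (\<lambda>y. a f ^ y) (node_form k r \<mu> a h y) w I"
      using msgs \<open>h \<in> H\<close> j by (force simp: det_rep_def form_of_coords_content)
  qed
  moreover have "inj_on a H" using assms(1) fH by (metis Diff_subset atLeast0LessThan inj_on_subset order_trans)
  ultimately have "node_form k r \<mu> a f x = node_form k r \<mu> a f y"
    using exact_repair_node_forms assms(2,3) fH by blast
  then show "Defs.content (card (basis_set k r \<mu>)) (det_enc k r \<mu> a) f x
      = Defs.content (card (basis_set k r \<mu>)) (det_enc k r \<mu> a) f y"
    unfolding Defs.content_def det_enc_def by (rule arg_cong)
qed

lemma lin_on_node_form: "lin_on F (\<lambda>x. node_form k r \<mu> a i x w I)"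
  using node_form_lincomb[of k r \<mu> a i 1 _ 1] node_form_lincomb[of k r \<mu> a i _ _ 0]
  by (simp add: lin_on_def)

lemma lin_on_contr_node_form: "lin_on F (\<lambda>x. contr k r \<psi> (node_form k r \<mu> a i x) w I)"
proof -
  have "contr k r \<psi> (node_form k r \<mu> a i (\<lambda>t. c * x t + c' * y t)) w I
      = c * contr k r \<psi> (node_form k r \<mu> a i x) w I + c' * contr k r \<psi> (node_form k r \<mu> a i y) w I"
    for x y c c' 
    unfolding node_form_lincomb[abs_def] by (rule contr_lincomb)
  from this[where c = 1 and c' = 1] this[where c' = 0] show ?thesis by (simp add: lin_on_def)
qed

lemma det_code_linear_code:
  "linear_code n (card (basis_set k r \<mu>)) (card (repair_set k r \<mu>)) F (det_enc k r \<mu> a) (det_rep k r \<mu> a)"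
  by (simp add: linear_code_def det_enc_def det_rep_def form_of_coords_content lin_on_node_form
      lin_on_contr_node_form)

theorem theorem1:
  fixes n k d \<mu> :: nat
  assumes "1 \<le> k" and "k \<le> d" and "d < n"
    and "1 \<le> \<mu>" and "\<mu> \<le> k"
    and "card (UNIV :: 'a::{finite,field} set) \<ge> n"
  shows "\<exists>(enc :: nat \<Rightarrow> (nat \<Rightarrow> 'a::{finite,field}) \<Rightarrow> nat \<Rightarrow> 'a) rep.
           regen_code n k d (alpha_p k d \<mu>) (beta_p k d \<mu>) (nat (F_p k d \<mu>)) enc rep \<and>
           linear_code n (alpha_p k d \<mu>) (beta_p k d \<mu>) (nat (F_p k d \<mu>)) enc rep"
proof -
  define r where "r = d - k"
  have d: "d = k + r" using assms(2) by (simp add: r_def)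
  obtain a :: "nat \<Rightarrow> 'a" where "inj_on a {..<n}"
    using card_le_inj[of "{..<n}" "UNIV :: 'a set"] assms(6) by auto
  then have "regen_code n k d (alpha_p k d \<mu>) (beta_p k d \<mu>) (nat (F_p k d \<mu>)) (det_enc k r \<mu> a) (det_rep k r \<mu> a)"
    using det_code_regen_code[of a n k \<mu> "nat (F_p k d \<mu>)" r] card_free_set_ge[of k r \<mu>] assms(1,4)
    by (simp add: d card_basis_set card_repair_set)
  moreover have "linear_code n (alpha_p k d \<mu>) (beta_p k d \<mu>) (nat (F_p k d \<mu>)) (det_enc k r \<mu> a) (det_rep k r \<mu> a)"
    using det_code_linear_code[of n k r \<mu> "nat (F_p k d \<mu>)" a] assms(4)
    by (simp add: d card_basis_set card_repair_set)
  ultimately show ?thesis by blast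
qed

end
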